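(* Let $n\ge 3$ and let $CH_n$ be the closed Helm graph. Then $$\chi^+(CH_n)=\begin{cases}5n+1 & \text{if } n \text{ is even},\\ 7n-2 & \text{if } n \text{ is odd}.\end{cases}$$
   Context: The closed Helm graph $CH_n$ has vertices $v, v_1,\dots,v_n,u_1,\dots,u_n$; $v_1\dots v_n$ form a cycle, $u_1\dots u_n$ form a cycle (in this order), $v$ is adjacent to every $v_i$, and $u_i$ is adjacent to $v_i$ for each $i$ (i.e. the Helm graph with its pendant vertices joined into an outer cycle). For a proper colouring $c:V(G)\to\{1,\dots,k\}$ (colour $c_i$ identified with $i$), the colouring sum is $\sum_{i=1}^k i\,\theta(c_i)=\sum_v c(v)$, $\theta(c_i)$ the number of vertices of colour $c_i$. The $\chi^+$-chromatic sum $\chi^+(G)$ is the maximum colouring sum over all proper colourings $c:V(G)\to\{1,\dots,\chi(G)\}$, $\chi(G)$ the chromatic number. *)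

theory Defs
  imports Main
begin

definition proper_colouring :: "'a set \<Rightarrow> ('a \<Rightarrow> 'a \<Rightarrow> bool) \<Rightarrow> nat \<Rightarrow> ('a \<Rightarrow> nat) \<Rightarrow> bool" where
  "proper_colouring V E k c \<longleftrightarrow>
     (\<forall>x\<in>V. c x \<in> {1..k}) \<and> (\<forall>x\<in>V. \<forall>y\<in>V. E x y \<longrightarrow> c x \<noteq> c y)"

definition chromatic_number :: "'a set \<Rightarrow> ('a \<Rightarrow> 'a \<Rightarrow> bool) \<Rightarrow> nat" where
  "chromatic_number V E = (LEAST k. \<exists>c. proper_colouring V E k c)"

definition colouring_sum :: "'a set \<Rightarrow> ('a \<Rightarrow> nat) \<Rightarrow> nat" where
  "colouring_sum V c = (\<Sum>x\<in>V. c x)"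

definition chi_plus :: "'a set \<Rightarrow> ('a \<Rightarrow> 'a \<Rightarrow> bool) \<Rightarrow> nat" where
  "chi_plus V E = Max {colouring_sum V c | c. proper_colouring V E (chromatic_number V E) c}"

(* Closed Helm graph CH_n: hub v, inner cycle v_0..v_{n-1}, outer cycle u_0..u_{n-1} *)
datatype helm_vertex = Hub | Inner nat | Outer nat

definition closed_helm_vertices :: "nat \<Rightarrow> helm_vertex set" where
  "closed_helm_vertices n = {Hub} \<union> Inner ` {..<n} \<union> Outer ` {..<n}"

definition closed_helm_arc :: "nat \<Rightarrow> helm_vertex \<Rightarrow> helm_vertex \<Rightarrow> bool" where
  "closed_helm_arc n x y \<longleftrightarrow>
     (\<exists>i<n. x = Hub \<and> y = Inner i) \<or>
     (\<exists>i<n. x = Inner i \<and> y = Inner ((i + 1) mod n)) \<or>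
     (\<exists>i<n. x = Outer i \<and> y = Outer ((i + 1) mod n)) \<or>
     (\<exists>i<n. x = Inner i \<and> y = Outer i)"

definition closed_helm_adj :: "nat \<Rightarrow> helm_vertex \<Rightarrow> helm_vertex \<Rightarrow> bool" where
  "closed_helm_adj n x y \<longleftrightarrow> closed_helm_arc n x y \<or> closed_helm_arc n y x"

end

theory Submission
  imports Defs
begin

text \<open>On a cycle of length \<open>n\<close> the shift \<open>i \<mapsto> i + 1\<close> maps every colour class of a proper
  colouring injectively into its complement, so each class has at most \<open>\<lfloor>n/2\<rfloor>\<close> vertices.
  Hence the sum over a cycle is at most \<open>\<lfloor>n/2\<rfloor>\<close> times each of the two largest available colours
  plus the third largest on the remaining vertices; the inner cycle of \<open>CH\<^sub>n\<close> must moreover avoid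
  the hub's colour. For even \<open>n\<close> three colours suffice, and the bound \<open>1 + 5n/2 + 5n/2\<close> is
  attained with hub 1 and both cycles alternating 3, 2 out of phase. For odd \<open>n\<close> the inner cycle
  plus the hub force four colours (an odd cycle is not 2-colourable), and the bound
  \<open>1 + (7n - 3)/2 + (7n - 3)/2\<close> is attained by alternating 4, 3 with one vertex of colour 2 on
  each cycle.\<close>

lemma sum_le_by_two_largest_values:
  fixes f :: "'a \<Rightarrow> nat"
  assumes "finite A" and vals: "\<And>i. i \<in> A \<Longrightarrow> f i \<in> {a, b} \<union> {..d}"
    and "d \<le> b" "b \<le> a"
    and cls: "\<And>x. card {i\<in>A. f i = x} \<le> m"
  shows "(\<Sum>i\<in>A. f i) \<le> d * card A + (a - d) * m + (b - d) * m"
proof -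
  have "(\<Sum>i\<in>A. f i) \<le> (\<Sum>i\<in>A. d + (a - d) * of_bool (f i = a) + (b - d) * of_bool (f i = b))"
    using vals \<open>d \<le> b\<close> \<open>b \<le> a\<close> by (intro sum_mono) fastforce
  also have "\<dots> = d * card A + (a - d) * card {i\<in>A. f i = a} + (b - d) * card {i\<in>A. f i = b}"
    using \<open>finite A\<close> by (simp add: sum.distrib flip: sum_distrib_left) (simp add: Int_def)
  also have "\<dots> \<le> d * card A + (a - d) * m + (b - d) * m"
    using cls by (intro add_mono mult_le_mono2) auto
  finally show ?thesis .
qed

lemma card_colour_class_cycle_le:
  assumes "\<And>i. i < n \<Longrightarrow> f i \<noteq> f ((i + 1) mod n)"
  shows "card {i\<in>{..<n}. f i = x} \<le> n div 2"
proof -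
  let ?C = "{i\<in>{..<n}. f i = x}" and ?next = "\<lambda>i. (i + 1) mod n"
  have "inj_on ?next {..<n}"
    by (auto simp: inj_on_def mod_if split: if_splits)
  have next_avoids: "?next ` ?C \<subseteq> {..<n} - ?C"
  proof
    fix j assume "j \<in> ?next ` ?C"
    then obtain i where "i < n" "f i = x" "j = ?next i" by auto
    then show "j \<in> {..<n} - ?C" using assms[of i] by auto
  qed
  have "card ?C = card (?next ` ?C)"
    by (rule card_image[symmetric, OF inj_on_subset[OF \<open>inj_on ?next {..<n}\<close>]]) auto
  also have "\<dots> \<le> card ({..<n} - ?C)"
    using next_avoids by (intro card_mono) auto
  also have "\<dots> = n - card ?C"
    by (subst card_Diff_subset) auto
  finally show ?thesis
    by linarith
qed

lemma cycle_colouring_sum_le: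
  fixes f :: "nat \<Rightarrow> nat"
  assumes "\<And>i. i < n \<Longrightarrow> f i \<noteq> f ((i + 1) mod n)"
    and "\<And>i. i < n \<Longrightarrow> f i \<in> {a, b} \<union> {..d}" and "d \<le> b" "b \<le> a"
  shows "(\<Sum>i<n. f i) \<le> d * n + (a - d) * (n div 2) + (b - d) * (n div 2)"
  using sum_le_by_two_largest_values[of "{..<n}" f a b d "n div 2"]
    card_colour_class_cycle_le[of n f, OF assms(1)] assms(2-4) by simp

lemma odd_cycle_not_two_coloured:
  fixes n :: nat
  assumes "odd n" and "\<And>i. i < n \<Longrightarrow> f i \<noteq> f ((i + 1) mod n)"
    and "\<And>i. i < n \<Longrightarrow> f i \<in> {a, b}"
  shows False
proof -
  have "{..<n} \<subseteq> {i\<in>{..<n}. f i = a} \<union> {i\<in>{..<n}. f i = b}"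
    using assms(3) by auto
  then have "card {..<n} \<le> card ({i\<in>{..<n}. f i = a} \<union> {i\<in>{..<n}. f i = b})"
    by (intro card_mono) auto
  also have "\<dots> \<le> card {i\<in>{..<n}. f i = a} + card {i\<in>{..<n}. f i = b}"
    by (rule card_Un_le)
  also have "\<dots> \<le> 2 * (n div 2)"
    using card_colour_class_cycle_le[of n f, OF assms(2)] by (metis mult_2 add_mono)
  finally show False
    using \<open>odd n\<close> by simp presburger
qed

lemma proper_colouring_mono:
  "proper_colouring V E k c \<Longrightarrow> k \<le> k' \<Longrightarrow> proper_colouring V E k' c"
  unfolding proper_colouring_def by auto

lemma chromatic_number_eqI:
  assumes "proper_colouring V E k c" and "\<And>c. \<not> proper_colouring V E (k - 1) c"
  shows "chromatic_number V E = k"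
  unfolding chromatic_number_def
proof (rule Least_equality)
  show "\<exists>c. proper_colouring V E k c"
    using assms(1) by blast
next
  fix k' assume "\<exists>c. proper_colouring V E k' c"
  then obtain c' where "proper_colouring V E k' c'" ..
  then show "k \<le> k'"
    using assms(2) proper_colouring_mono[of V E k' c' "k - 1"] by fastforce
qed

lemma chi_plus_eqI:
  assumes "chromatic_number V E = k"
    and "proper_colouring V E k c" "colouring_sum V c = s"
    and "\<And>c. proper_colouring V E k c \<Longrightarrow> colouring_sum V c \<le> s"
  shows "chi_plus V E = s"
proof -
  let ?S = "{colouring_sum V c |c. proper_colouring V E k c}"
  have "?S \<subseteq> {..s}"
    using assms(4) by auto
  then have "Max ?S = s"
    using assms(2,3) by (intro Max_eqI) (auto intro: finite_subset)
  then show ?thesis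
    unfolding chi_plus_def assms(1) .
qed

lemma sum_alternating: "(\<Sum>i<2 * m. if even i then a else b) = m * (a + b :: nat)"
  by (induction m) (simp_all add: mult_2)

lemma closed_helm_proper_colouring_iff:
  "proper_colouring (closed_helm_vertices n) (closed_helm_adj n) k c \<longleftrightarrow>
     c Hub \<in> {1..k} \<and>
     (\<forall>i<n. c (Inner i) \<in> {1..k} \<and> c (Outer i) \<in> {1..k} \<and> c Hub \<noteq> c (Inner i) \<and>
            c (Inner i) \<noteq> c (Inner ((i + 1) mod n)) \<and> c (Outer i) \<noteq> c (Outer ((i + 1) mod n)) \<and>
            c (Inner i) \<noteq> c (Outer i))"
  unfolding proper_colouring_def closed_helm_vertices_def closed_helm_adj_def closed_helm_arc_def
  by (auto 0 4)

lemma colouring_sum_closed_helm: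
  "colouring_sum (closed_helm_vertices n) c = c Hub + (\<Sum>i<n. c (Inner i)) + (\<Sum>i<n. c (Outer i))"
proof -
  have "closed_helm_vertices n = insert Hub (Inner ` {..<n} \<union> Outer ` {..<n})"
    by (auto simp: closed_helm_vertices_def)
  moreover have "(\<Sum>x\<in>Inner ` {..<n} \<union> Outer ` {..<n}. c x) = (\<Sum>i<n. c (Inner i)) + (\<Sum>i<n. c (Outer i))"
    by (subst sum.union_disjoint) (auto simp: sum.reindex inj_on_def)
  ultimately show ?thesis
    by (simp add: colouring_sum_def image_iff add.assoc)
qed

definition helm_colouring_even :: "helm_vertex \<Rightarrow> nat" where
  "helm_colouring_even v =
     (case v of Hub \<Rightarrow> 1 | Inner i \<Rightarrow> if even i then 3 else 2 | Outer i \<Rightarrow> if even i then 2 else 3)"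

definition helm_colouring_odd :: "nat \<Rightarrow> helm_vertex \<Rightarrow> nat" where
  "helm_colouring_odd n v =
     (case v of Hub \<Rightarrow> 1
      | Inner i \<Rightarrow> if i = n - 1 then 2 else if even i then 4 else 3
      | Outer i \<Rightarrow> if i = 0 then 2 else if even i then 3 else 4)"

lemma proper_colouring_helm_colouring_even:
  assumes "even n"
  shows "proper_colouring (closed_helm_vertices n) (closed_helm_adj n) 3 helm_colouring_even"
  using assms by (auto simp: closed_helm_proper_colouring_iff helm_colouring_even_def mod_Suc)

lemma proper_colouring_helm_colouring_odd:
  assumes "odd n" "n \<ge> 3"
  shows "proper_colouring (closed_helm_vertices n) (closed_helm_adj n) 4 (helm_colouring_odd n)"
  using assms by (auto simp: closed_helm_proper_colouring_iff helm_colouring_odd_def mod_Suc)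

lemma colouring_sum_helm_colouring_even:
  assumes "even n"
  shows "colouring_sum (closed_helm_vertices n) helm_colouring_even = 5 * n + 1"
proof -
  from assms obtain k where n: "n = 2 * k" ..
  show ?thesis
    using sum_alternating[where m = k and a = 3 and b = 2] sum_alternating[where m = k and a = 2 and b = 3]
    by (simp add: colouring_sum_closed_helm helm_colouring_even_def n)
qed

lemma colouring_sum_helm_colouring_odd:
  assumes "odd n"
  shows "colouring_sum (closed_helm_vertices n) (helm_colouring_odd n) = 7 * n - 2"
proof -
  from assms obtain k where n: "n = 2 * k + 1" using oddE by blast
  have "(\<Sum>i<2 * k. helm_colouring_odd n (Inner i)) = (\<Sum>i<2 * k. if even i then 4 else 3)"
    by (rule sum.cong) (auto simp: n helm_colouring_odd_def)
  then have "(\<Sum>i<n. helm_colouring_odd n (Inner i)) = (\<Sum>i<2 * k. if even i then 4 else 3) + 2"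
    by (simp add: n helm_colouring_odd_def)
  moreover have "(\<Sum>i<2 * k. helm_colouring_odd n (Outer (Suc i))) = (\<Sum>i<2 * k. if even i then 4 else 3)"
    by (rule sum.cong) (auto simp: helm_colouring_odd_def)
  then have "(\<Sum>i<n. helm_colouring_odd n (Outer i)) = 2 + (\<Sum>i<2 * k. if even i then 4 else 3)"
    by (simp add: n helm_colouring_odd_def sum.lessThan_Suc_shift del: sum.lessThan_Suc)
  ultimately show ?thesis
    using sum_alternating[where m = k and a = 4 and b = 3]
    by (simp add: colouring_sum_closed_helm helm_colouring_odd_def n)
qed

lemma closed_helm_not_2_colourable:
  assumes "n \<ge> 2"
  shows "\<not> proper_colouring (closed_helm_vertices n) (closed_helm_adj n) 2 c"
proof
  assume "proper_colouring (closed_helm_vertices n) (closed_helm_adj n) 2 c"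
  then have "c Hub \<in> {1..2}" and inner: "\<And>i. i < n \<Longrightarrow>
      c (Inner i) \<in> {1..2} \<and> c Hub \<noteq> c (Inner i) \<and> c (Inner i) \<noteq> c (Inner ((i + 1) mod n))"
    unfolding closed_helm_proper_colouring_iff by auto
  moreover have "c (Inner 0) \<in> {1..2}" "c Hub \<noteq> c (Inner 0)" "c (Inner 0) \<noteq> c (Inner 1)"
    using inner[of 0] assms by auto
  moreover have "c (Inner 1) \<in> {1..2}" "c Hub \<noteq> c (Inner 1)"
    using inner[of 1] assms by auto
  ultimately show False
    by auto
qed

lemma closed_helm_odd_not_3_colourable:
  assumes "odd n"
  shows "\<not> proper_colouring (closed_helm_vertices n) (closed_helm_adj n) 3 c"
proof
  assume "proper_colouring (closed_helm_vertices n) (closed_helm_adj n) 3 c"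
  then show False
    by (intro odd_cycle_not_two_coloured[OF assms, where f = "\<lambda>i. c (Inner i)"
          and a = "if c Hub = 1 then 2 else 1" and b = "if c Hub = 3 then 2 else 3"])
      (auto simp: closed_helm_proper_colouring_iff)
qed

lemma chromatic_number_closed_helm_even:
  assumes "even n" "n \<ge> 2"
  shows "chromatic_number (closed_helm_vertices n) (closed_helm_adj n) = 3"
  by (rule chromatic_number_eqI[OF proper_colouring_helm_colouring_even[OF assms(1)]])
    (use closed_helm_not_2_colourable[OF assms(2)] in simp)

lemma chromatic_number_closed_helm_odd:
  assumes "odd n" "n \<ge> 3"
  shows "chromatic_number (closed_helm_vertices n) (closed_helm_adj n) = 4"
  by (rule chromatic_number_eqI[OF proper_colouring_helm_colouring_odd[OF assms]])
    (use closed_helm_odd_not_3_colourable[OF assms(1)] in simp)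

lemma colouring_sum_closed_helm_even_le:
  assumes "even n" "n \<ge> 2"
    and proper: "proper_colouring (closed_helm_vertices n) (closed_helm_adj n) 3 c"
  shows "colouring_sum (closed_helm_vertices n) c \<le> 5 * n + 1"
proof -
  from assms(1) obtain k where n: "n = 2 * k" ..
  from proper have hub: "c Hub \<in> {1..3}"
    and inner: "\<And>i. i < n \<Longrightarrow> c (Inner i) \<in> {1..3} - {c Hub}"
    and outer: "\<And>i. i < n \<Longrightarrow> c (Outer i) \<in> {1..3}"
    and inner_cycle: "\<And>i. i < n \<Longrightarrow> c (Inner i) \<noteq> c (Inner ((i + 1) mod n))"
    and outer_cycle: "\<And>i. i < n \<Longrightarrow> c (Outer i) \<noteq> c (Outer ((i + 1) mod n))"
    unfolding closed_helm_proper_colouring_iff by auto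
  have "(\<Sum>i<n. c (Outer i)) \<le> 5 * k"
    using cycle_colouring_sum_le[where f = "\<lambda>i. c (Outer i)" and a = 3 and b = 2 and d = 1, OF outer_cycle]
      outer n by fastforce
  moreover have "c Hub + (\<Sum>i<n. c (Inner i)) \<le> 5 * k + 1"
  proof -
    consider "c Hub = 1" | "c Hub = 2" | "c Hub = 3"
      using hub by force
    then show ?thesis
    proof cases
      case 1
      then show ?thesis
        using cycle_colouring_sum_le[where f = "\<lambda>i. c (Inner i)" and a = 3 and b = 2 and d = 1, OF inner_cycle]
          inner n by fastforce
    next
      case 2
      then show ?thesis
        using cycle_colouring_sum_le[where f = "\<lambda>i. c (Inner i)" and a = 3 and b = 1 and d = 1, OF inner_cycle]
          inner n assms(2) by fastforce
    next
      case 3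
      then show ?thesis
        using cycle_colouring_sum_le[where f = "\<lambda>i. c (Inner i)" and a = 2 and b = 1 and d = 1, OF inner_cycle]
          inner n assms(2) by fastforce
    qed
  qed
  ultimately show ?thesis
    unfolding colouring_sum_closed_helm n by linarith
qed

lemma colouring_sum_closed_helm_odd_le:
  assumes "odd n" "n \<ge> 3"
    and proper: "proper_colouring (closed_helm_vertices n) (closed_helm_adj n) 4 c"
  shows "colouring_sum (closed_helm_vertices n) c \<le> 7 * n - 2"
proof -
  from assms(1) obtain k where n: "n = 2 * k + 1" using oddE by blast
  from proper have hub: "c Hub \<in> {1..4}"
    and inner: "\<And>i. i < n \<Longrightarrow> c (Inner i) \<in> {1..4} - {c Hub}"
    and outer: "\<And>i. i < n \<Longrightarrow> c (Outer i) \<in> {1..4}"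
    and inner_cycle: "\<And>i. i < n \<Longrightarrow> c (Inner i) \<noteq> c (Inner ((i + 1) mod n))"
    and outer_cycle: "\<And>i. i < n \<Longrightarrow> c (Outer i) \<noteq> c (Outer ((i + 1) mod n))"
    unfolding closed_helm_proper_colouring_iff by auto
  have "(\<Sum>i<n. c (Outer i)) \<le> 7 * k + 2"
    using cycle_colouring_sum_le[where f = "\<lambda>i. c (Outer i)" and a = 4 and b = 3 and d = 2, OF outer_cycle]
      outer n by fastforce
  moreover have "c Hub + (\<Sum>i<n. c (Inner i)) \<le> 7 * k + 3"
  proof -
    consider "c Hub = 1" | "c Hub = 2" | "c Hub = 3" | "c Hub = 4"
      using hub by force
    then show ?thesis
    proof cases
      case 1
      then show ?thesis
        using cycle_colouring_sum_le[where f = "\<lambda>i. c (Inner i)" and a = 4 and b = 3 and d = 2, OF inner_cycle]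
          inner n by fastforce
    next
      case 2
      then show ?thesis
        using cycle_colouring_sum_le[where f = "\<lambda>i. c (Inner i)" and a = 4 and b = 3 and d = 1, OF inner_cycle]
          inner n by fastforce
    next
      case 3
      then show ?thesis
        using cycle_colouring_sum_le[where f = "\<lambda>i. c (Inner i)" and a = 4 and b = 2 and d = 1, OF inner_cycle]
          inner n assms(2) by fastforce
    next
      case 4
      then show ?thesis
        using cycle_colouring_sum_le[where f = "\<lambda>i. c (Inner i)" and a = 3 and b = 2 and d = 1, OF inner_cycle]
          inner n assms(2) by fastforce
    qed
  qed
  ultimately show ?thesis
    unfolding colouring_sum_closed_helm n by arith
qed

theorem theorem2p10:
  fixes n :: nat
  assumes "n \<ge> 3"
  shows "chi_plus (closed_helm_vertices n) (closed_helm_adj n) =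
           (if even n then 5 * n + 1 else 7 * n - 2)"
proof (cases "even n")
  case True
  with assms show ?thesis
    by (simp add: chi_plus_eqI[OF chromatic_number_closed_helm_even
          proper_colouring_helm_colouring_even colouring_sum_helm_colouring_even
          colouring_sum_closed_helm_even_le])
next
  case False
  with assms show ?thesis
    by (simp add: chi_plus_eqI[OF chromatic_number_closed_helm_odd
          proper_colouring_helm_colouring_odd colouring_sum_helm_colouring_odd
          colouring_sum_closed_helm_odd_le])
qed

end
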